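(* Let the type be $\mathrm B_n$, $n\ge2$. For $j\in I$ and $k\in\mathbb Z_{\ge0}$: \[ \tilde c_{ji}(-2k-1)=0\ \text{ for } i\in I\setminus\{n\},\qquad \tilde c_{jn}(-2k-2)=0. \] For $j\in I$ and $k=0,1,\dots,n-1$: \[ \tilde c_{ji}(-2k)=\begin{cases}1&\text{if }(\ast)\\0&\text{otherwise}\end{cases}\ (i\in I\setminus\{n\}),\qquad \tilde c_{jn}(-2k-1)=\begin{cases}1&\text{if }k+j-n\in2\mathbb Z_{\ge0}\\0&\text{otherwise.}\end{cases} \] Here $(\ast)$ is the condition that either - [$i+1\le k+j\le 2n-i-1$ and $1-i\le k-j\le i-1$, with $(k+j)-(i+1)\in2\mathbb Z_{\ge0}$ and $(k-j)-(1-i)\in2\mathbb Z_{\ge0}$], or - [$2n-i\le k+j$]. Moreover, for $j\in I$ and $k=0,1,\dots,n-1$: \[ \tilde c_{ji}(-2k)=\tilde c_{ji}(-4n+2+2k)\ (i\in I\setminus\{n\}),\qquad \tilde c_{jn}(-2k-1)=\tilde c_{jn}(-4n+3+2k). \]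
   Context: Let $\mathfrak g$ be of type $\mathrm B_n$ ($n\ge2$), with $I=\{1,\dots,n\}$ and $\alpha_n$ short. The Cartan matrix $c_{ij}=\langle h_i,\alpha_j\rangle$ has: - $c_{ii}=2$; - $c_{i,i+1}=c_{i+1,i}=-1$ for $1\le i\le n-2$; - $c_{n-1,n}=-1$ and $c_{n,n-1}=-2$; - all other entries $0$. Put $r_i=2$ for $i\le n-1$ and $r_n=1$. Define the quantum Cartan matrix $C(z)$ over $\mathbb Z[z^{\pm1}]$ by $C(z)_{ii}=z^{r_i}+z^{-r_i}$ and $C(z)_{ij}=[c_{ij}]_z=(z^{c_{ij}}-z^{-c_{ij}})/(z-z^{-1})$ for $i\neq j$. Let $\widetilde C(z)=C(z)^{-1}$, with entries regarded as elements of $\mathbb Z((z^{-1}))$, and write $\widetilde C(z)_{ji}=\sum_{r\in\mathbb Z}\tilde c_{ji}(r)z^r$. *)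

theory Defs
  imports "HOL-Computational_Algebra.Formal_Laurent_Series"
begin

text \<open>Laurent series in z^{-1}: we use the fls type in the variable X = z^{-1},
  so z is represented by fls_X_inv and the coefficient of z^r in f is fls_nth f (-r).\<close>

definition qz :: "rat fls" where
  "qz = fls_X_inv"

text \<open>Cartan matrix of type B_n (1-indexed, alpha_n short).\<close>
definition cartanB :: "nat \<Rightarrow> nat \<Rightarrow> nat \<Rightarrow> int" where
  "cartanB n i j =
     (if i = j then 2
      else if (i + 1 = j \<or> j + 1 = i) \<and> 1 \<le> i \<and> 1 \<le> j \<and> i \<le> n \<and> j \<le> n then
        (if i = n \<and> j = n - 1 then -2 else -1)
      else 0)"

definition rB :: "nat \<Rightarrow> nat \<Rightarrow> int" where
  "rB n i = (if i = n then 1 else 2)"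

definition qint :: "int \<Rightarrow> rat fls" where
  "qint m = (qz powi m - qz powi (-m)) / (qz - qz powi (-1))"

definition qCartanB :: "nat \<Rightarrow> nat \<Rightarrow> nat \<Rightarrow> rat fls" where
  "qCartanB n i j =
     (if i = j then qz powi (rB n i) + qz powi (- rB n i) else qint (cartanB n i j))"

text \<open>The inverse matrix tilde C(z) = C(z)^{-1}, indices in {1..n}
  (entries outside the index range set to 0 for uniqueness).\<close>
definition is_inverse_on :: "nat \<Rightarrow> (nat \<Rightarrow> nat \<Rightarrow> 'a::field) \<Rightarrow> (nat \<Rightarrow> nat \<Rightarrow> 'a) \<Rightarrow> bool" where
  "is_inverse_on n A B \<longleftrightarrow>
     (\<forall>i\<in>{1..n}. \<forall>k\<in>{1..n}. (\<Sum>j=1..n. A i j * B j k) = (if i = k then 1 else 0)) \<and>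
     (\<forall>i\<in>{1..n}. \<forall>k\<in>{1..n}. (\<Sum>j=1..n. B i j * A j k) = (if i = k then 1 else 0)) \<and>
     (\<forall>i j. \<not> (i \<in> {1..n} \<and> j \<in> {1..n}) \<longrightarrow> B i j = 0)"

definition invQCartanB :: "nat \<Rightarrow> nat \<Rightarrow> nat \<Rightarrow> rat fls" where
  "invQCartanB n = (THE B. is_inverse_on n (qCartanB n) B)"

definition ctilde :: "nat \<Rightarrow> nat \<Rightarrow> nat \<Rightarrow> int \<Rightarrow> rat" where
  "ctilde n j i r = fls_nth (invQCartanB n j i) (- r)"

end

theory Submission
  imports Defs
begin

(*
  Write X = z^-1. The quantum integers are invariant under z <-> z^-1, so C(z) is a tridiagonal
  matrix of Laurent polynomials in X. Both S(l) = X^(2l) - X^(-2l) and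
  G(l) = X^(2n-1-2l) + X^(2l-2n+1) solve the three-term recurrence of the rows i < n; S vanishes
  at l = 0 and G takes the same value at l = n-1 and l = n, which is the boundary condition of
  row n. Hence the discrete Green's function S(min(j,i)) G(max(j,i)), with its last column divided
  by z + z^-1, is (X^2 - X^-2)(X^(2n-1) + X^(1-2n)) times the inverse of C(z); it is also a right
  inverse because C(z) becomes symmetric after that rescaling of its last column.

  Cross-multiplying, each entry of the inverse is P / (1 + X^(4n-2)), where P has 0/1 coefficients
  supported on at most two arithmetic progressions of step 4 inside (0, 4n-2) and is invariant
  under r -> 4n-2-r. Expanding 1 / (1 + X^(4n-2)) as an alternating geometric series, the
  coefficients of z^r for -(4n-2) <= r <= 0 are read off from P: the parity of the progressions
  gives the vanishing statements, their position gives the starred condition, and the reflection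
  symmetry gives the last two identities.
*)

(* A named copy of powi, so that the simplifier merges products of monomials
   instead of rewriting the integer powers themselves. *)
definition mon :: "'a::field \<Rightarrow> int \<Rightarrow> 'a" where
  "mon x e = x powi e"

definition qplus :: "'a::field \<Rightarrow> int \<Rightarrow> 'a" where
  "qplus x e = mon x e + mon x (- e)"

definition qminus :: "'a::field \<Rightarrow> int \<Rightarrow> 'a" where
  "qminus x e = mon x e - mon x (- e)"

lemma qplus_uminus: "qplus x (- e) = qplus x e"
  by (simp add: qplus_def)

context
  fixes x :: "'a::field"
  assumes x: "x \<noteq> 0"
begin

lemma mon_mult: "mon x a * mon x b = mon x (a + b)"
  using x by (simp add: power_int_add mon_def)

lemma mon_mult_left: "mon x a * (mon x b * c) = mon x (a + b) * c"
  by (simp flip: mon_mult add: mult.assoc)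

lemmas mon_simps = mon_mult mon_mult_left

lemma qplus_2_qminus: "qplus x 2 * qminus x e = qminus x (e + 2) + qminus x (e - 2)"
  unfolding qplus_def qminus_def by (simp add: algebra_simps mon_simps)

lemma qplus_2_qplus: "qplus x 2 * qplus x e = qplus x (e + 2) + qplus x (e - 2)"
  unfolding qplus_def by (simp add: algebra_simps mon_simps)

lemma qminus_qplus_defect:
  "qplus x 2 * qminus x a * qplus x c - qminus x (a - 2) * qplus x c - qminus x a * qplus x (c - 2)
     = qminus x 2 * qplus x (a + c)"
  unfolding qplus_def qminus_def by (simp add: algebra_simps mon_simps)

lemma qplus_1_qminus_diff:
  "qplus x 1 * (qminus x (e + 1) - qminus x (e - 1)) = qminus x 2 * qplus x e"
  unfolding qplus_def qminus_def
  by (simp add: algebra_simps mon_simps) (rule arg_cong[where f = "mon x"], simp)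

lemma qminus_qplus_progression_identity:
  "qminus x (2 * a) * qplus x (2 * n - 1 - 2 * b) * (1 + mon x (4 * n - 2)) * (mon x 4 - 1)
     = (mon x (2 * b - 2 * a + 2 + 4 * a) - mon x (2 * b - 2 * a + 2)
        + (mon x (4 * n - 2 * b - 2 * a + 4 * a) - mon x (4 * n - 2 * b - 2 * a)))
       * (qminus x 2 * qplus x (2 * n - 1))"
  unfolding qplus_def qminus_def by (simp add: algebra_simps mon_simps)

lemma qminus_progression_identity:
  "qminus x (2 * a) * (1 + mon x (4 * n - 2)) * (mon x 4 - 1)
     = (mon x (2 * n + 1 - 2 * a + 4 * a) - mon x (2 * n + 1 - 2 * a)) * (qminus x 2 * qplus x (2 * n - 1))"
  unfolding qplus_def qminus_def by (simp add: algebra_simps mon_simps)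

end

lemma three_term_min_max:
  fixes f g :: "int \<Rightarrow> 'a::comm_ring"
  assumes f: "\<And>l. f (l + 1) + f (l - 1) = c * f l"
    and g: "\<And>l. g (l + 1) + g (l - 1) = c * g l"
  shows "c * (f (min i j) * g (max i j)) - f (min (i - 1) j) * g (max (i - 1) j)
           - f (min (i + 1) j) * g (max (i + 1) j)
         = (if i = j then c * f j * g j - f (j - 1) * g j - f j * g (j + 1) else 0)"
proof (cases i j rule: linorder_cases)
  case less
  then have "min i j = i" "min (i - 1) j = i - 1" "min (i + 1) j = i + 1"
    "max i j = j" "max (i - 1) j = j" "max (i + 1) j = j" by auto
  moreover have "c * (f i * g j) - f (i - 1) * g j - f (i + 1) * g j
      = (c * f i - (f (i + 1) + f (i - 1))) * g j"
    by (simp add: algebra_simps)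
  ultimately show ?thesis using less by (simp add: f)
next
  case greater
  then have "min i j = j" "min (i - 1) j = j" "min (i + 1) j = j"
    "max i j = i" "max (i - 1) j = i - 1" "max (i + 1) j = i + 1" by auto
  moreover have "c * (f j * g i) - f j * g (i - 1) - f j * g (i + 1)
      = (c * g i - (g (i + 1) + g (i - 1))) * f j"
    by (simp add: algebra_simps)
  ultimately show ?thesis using greater by (simp add: g)
qed (simp add: mult.assoc)

lemma mon_fls_X_nth: "fls_nth (mon (fls_X :: 'a::field fls) e) m = (if m = e then 1 else 0)"
  by (simp add: mon_def)

lemma mon_fls_X_times_nth: "fls_nth (mon (fls_X :: 'a::field fls) e * f) m = fls_nth f (m - e)"
  by (simp add: mon_def fls_X_intpow_times_conv_shift)

lemma qz_powi: "qz powi r = mon fls_X (- r)"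
proof -
  have qz: "qz = fls_X powi (-1)"
    unfolding qz_def fls_X_inv_conv_shift_1 fls_X_power_int by simp
  show ?thesis
    unfolding mon_def qz by (simp only: power_int_mult[symmetric]) simp
qed

lemma qz_eq_mon: "qz = mon fls_X (-1)"
  using qz_powi[of 1] by simp

lemma qint_0: "qint 0 = 0"
  by (simp add: qint_def)

lemma qint_neg1: "qint (-1) = -1"
proof -
  have "mon fls_X (-1) - mon fls_X 1 \<noteq> (0 :: rat fls)"
    by (rule fls_nonzeroI[of _ "-1"]) (simp add: mon_fls_X_nth)
  then show ?thesis
    unfolding qint_def qz_powi unfolding qz_eq_mon by (simp add: field_simps)
qed

lemma qint_neg2: "qint (-2) = - qplus fls_X 1"
proof -
  have "mon fls_X (-1) - mon fls_X 1 \<noteq> (0 :: rat fls)"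
    by (rule fls_nonzeroI[of _ "-1"]) (simp add: mon_fls_X_nth)
  moreover have "qplus fls_X 1 * (mon fls_X (-1) - mon fls_X 1) = mon fls_X (-2) - (mon fls_X 2 :: rat fls)"
    unfolding qplus_def by (simp add: algebra_simps mon_simps)
  ultimately show ?thesis
    unfolding qint_def qz_powi unfolding qz_eq_mon by (simp add: field_simps)
qed

lemma qCartanB_diag: "qCartanB n i i = (if i = n then qplus fls_X 1 else qplus fls_X 2)"
  by (simp add: qCartanB_def rB_def qz_powi qplus_def add.commute)

lemma qCartanB_below:
  "2 \<le> i \<Longrightarrow> i \<le> n \<Longrightarrow> qCartanB n i (i - 1) = (if i = n then - qplus fls_X 1 else -1)"
proof -
  assume "2 \<le> i" "i \<le> n"
  then have "cartanB n i (i - 1) = (if i = n then -2 else -1)" "i - 1 \<noteq> i"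
    by (auto simp: cartanB_def)
  then show ?thesis by (simp add: qCartanB_def qint_neg1 qint_neg2)
qed

lemma qCartanB_above: "1 \<le> i \<Longrightarrow> i < n \<Longrightarrow> qCartanB n i (i + 1) = -1"
  by (simp add: qCartanB_def cartanB_def qint_neg1)

lemma qCartanB_zero:
  assumes "l \<noteq> i" "l + 1 \<noteq> i \<or> l = 0" "i + 1 \<noteq> l \<or> n < l"
  shows "qCartanB n i l = 0"
  using assms by (auto simp: qCartanB_def cartanB_def qint_0)

lemma sum_tridiagonal:
  fixes a :: "nat \<Rightarrow> 'b::comm_monoid_add"
  assumes i: "1 \<le> i" "i \<le> n" and "a 0 = 0" "a (n + 1) = 0"
    and far: "\<And>l. l \<noteq> i - 1 \<Longrightarrow> l \<noteq> i \<Longrightarrow> l \<noteq> i + 1 \<Longrightarrow> a l = 0"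
  shows "(\<Sum>l=1..n. a l) = a (i - 1) + a i + a (i + 1)"
proof -
  have "(\<Sum>l=1..n. a l) = (\<Sum>l\<in>{1..n} \<union> {i - 1, i, i + 1}. a l)"
  proof (rule sum.mono_neutral_left)
    show "\<forall>l\<in>{1..n} \<union> {i - 1, i, i + 1} - {1..n}. a l = 0"
    proof
      fix l assume "l \<in> {1..n} \<union> {i - 1, i, i + 1} - {1..n}"
      with i have "l = 0 \<or> l = n + 1" by auto
      with assms show "a l = 0" by auto
    qed
  qed auto
  also have "\<dots> = (\<Sum>l\<in>{i - 1, i, i + 1}. a l)"
    by (rule sum.mono_neutral_right) (use far in auto)
  also have "\<dots> = a (i - 1) + a i + a (i + 1)"
    using i by (cases i) (simp_all add: add.assoc)
  finally show ?thesis .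
qed

lemma qCartanB_row_sum:
  assumes "1 \<le> i" "i \<le> n"
  shows "(\<Sum>l=1..n. qCartanB n i l * h l)
    = qCartanB n i (i - 1) * h (i - 1) + qCartanB n i i * h i + qCartanB n i (i + 1) * h (i + 1)"
  by (rule sum_tridiagonal) (use assms in \<open>auto simp: qCartanB_zero\<close>)

definition lowB :: "int \<Rightarrow> rat fls" where
  "lowB l = qminus fls_X (2 * l)"

definition highB :: "nat \<Rightarrow> int \<Rightarrow> rat fls" where
  "highB n l = qplus fls_X (2 * int n - 1 - 2 * l)"

definition kernelB :: "nat \<Rightarrow> nat \<Rightarrow> nat \<Rightarrow> rat fls" where
  "kernelB n l j = lowB (min (int l) (int j)) * highB n (max (int l) (int j))"

definition denomB :: "nat \<Rightarrow> rat fls" where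
  "denomB n = qminus fls_X 2 * qplus fls_X (2 * int n - 1)"

definition scaleB :: "nat \<Rightarrow> nat \<Rightarrow> rat fls" where
  "scaleB n j = (if j = n then qplus fls_X 1 else 1)"

lemma lowB_recurrence: "lowB (l + 1) + lowB (l - 1) = qplus fls_X 2 * lowB l"
  unfolding lowB_def by (simp add: qplus_2_qminus algebra_simps)

lemma highB_recurrence: "highB n (l + 1) + highB n (l - 1) = qplus fls_X 2 * highB n l"
  unfolding highB_def by (simp add: qplus_2_qplus algebra_simps)

lemma highB_top: "highB n (int n) = qplus fls_X 1" "highB n (int n - 1) = qplus fls_X 1"
  unfolding highB_def using qplus_uminus[of "fls_X :: rat fls" 1] by simp_all

lemma kernelB_commute: "kernelB n l j = kernelB n j l"
  by (simp add: kernelB_def min.commute max.commute)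

lemma kernelB_three_term:
  assumes "1 \<le> i"
  shows "qplus fls_X 2 * kernelB n i j - kernelB n (i - 1) j - kernelB n (i + 1) j
    = (if i = j then denomB n else 0)"
proof -
  have defect: "qplus fls_X 2 * lowB l * highB n l - lowB (l - 1) * highB n l - lowB l * highB n (l + 1)
      = denomB n" for l
    using qminus_qplus_defect[of "fls_X :: rat fls" "2 * l" "2 * int n - 1 - 2 * l"]
    by (simp add: lowB_def highB_def denomB_def algebra_simps)
  have "kernelB n (i - 1) j = lowB (min (int i - 1) (int j)) * highB n (max (int i - 1) (int j))"
    using assms by (simp add: kernelB_def of_nat_diff)
  moreover have "kernelB n (i + 1) j = lowB (min (int i + 1) (int j)) * highB n (max (int i + 1) (int j))"
    by (simp add: kernelB_def add.commute)
  ultimately show ?thesis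
    using three_term_min_max[OF lowB_recurrence highB_recurrence[of n], where i = "int i" and j = "int j"]
    by (simp only: kernelB_def[of n i j] defect of_nat_eq_iff)
qed

lemma kernelB_0 [simp]: "kernelB n 0 j = 0"
  by (simp add: kernelB_def lowB_def qminus_def)

lemma qCartanB_kernelB:
  assumes n: "2 \<le> n" and i: "1 \<le> i" "i \<le> n" and j: "1 \<le> j" "j \<le> n"
  shows "(\<Sum>l=1..n. qCartanB n i l * kernelB n l j) = (if i = j then scaleB n j * denomB n else 0)"
proof (cases "i < n")
  case True
  have "qCartanB n i (i - 1) * kernelB n (i - 1) j = - kernelB n (i - 1) j"
  proof (cases "i = 1")
    case False
    then show ?thesis using True i qCartanB_below[of i n] by simp
  qed simp
  then show ?thesis
    unfolding qCartanB_row_sum[OF i] qCartanB_above[OF i(1) True]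
    using kernelB_three_term[OF i(1), of n j] True
    by (auto simp: qCartanB_diag scaleB_def algebra_simps)
next
  case False
  then have [simp]: "i = n" using i by simp
  have "qCartanB n n (n + 1) = 0" by (simp add: qCartanB_zero)
  then have "(\<Sum>l=1..n. qCartanB n i l * kernelB n l j)
      = qplus fls_X 1 * (kernelB n n j - kernelB n (n - 1) j)"
    using qCartanB_row_sum[of n n "\<lambda>l. kernelB n l j"] qCartanB_below[of n n] n
    by (simp add: qCartanB_diag algebra_simps)
  also have "\<dots> = (if i = j then scaleB n j * denomB n else 0)"
  proof (cases "j = n")
    case True
    have "qplus fls_X 1 * (lowB (int n) - lowB (int n - 1)) = denomB n"
      using qplus_1_qminus_diff[of "fls_X :: rat fls" "2 * int n - 1"]
      by (simp add: lowB_def denomB_def algebra_simps)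
    then show ?thesis
      using True n by (simp add: kernelB_def highB_top of_nat_diff scaleB_def algebra_simps)
  next
    case False
    then show ?thesis
      using j by (simp add: kernelB_def highB_top of_nat_diff)
  qed
  finally show ?thesis .
qed

definition greenB :: "nat \<Rightarrow> nat \<Rightarrow> nat \<Rightarrow> rat fls" where
  "greenB n j i = (if j \<in> {1..n} \<and> i \<in> {1..n} then kernelB n j i / (scaleB n i * denomB n) else 0)"

lemma qplus_fls_X_nonzero: "qplus fls_X e \<noteq> (0 :: 'a::field_char_0 fls)"
  by (rule fls_nonzeroI[of _ e]) (simp add: qplus_def mon_fls_X_nth)

lemma qminus_fls_X_nonzero: "e \<noteq> 0 \<Longrightarrow> qminus fls_X e \<noteq> (0 :: 'a::field fls)"
  by (rule fls_nonzeroI[of _ e]) (simp add: qminus_def mon_fls_X_nth)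

lemma scaleB_denomB_nonzero: "scaleB n j * denomB n \<noteq> 0"
  by (simp add: scaleB_def denomB_def qplus_fls_X_nonzero qminus_fls_X_nonzero)

lemma qCartanB_symmetrizable:
  assumes "l \<in> {1..n}" "j \<in> {1..n}"
  shows "qCartanB n l j * scaleB n j = qCartanB n j l * scaleB n l"
  using assms by (auto simp: qCartanB_def cartanB_def scaleB_def qint_0 qint_neg1 qint_neg2)

lemma is_inverse_on_unique:
  fixes A B1 B2 :: "nat \<Rightarrow> nat \<Rightarrow> 'a::field"
  assumes h1: "is_inverse_on n A B1" and h2: "is_inverse_on n A B2"
  shows "B1 = B2"
proof (intro ext)
  fix i k
  show "B1 i k = B2 i k"
  proof (cases "i \<in> {1..n} \<and> k \<in> {1..n}")
    case False
    then show ?thesis using h1 h2 unfolding is_inverse_on_def by auto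
  next
    case True
    have "B1 i k = (\<Sum>j=1..n. if j = k then B1 i j else 0)"
      using True by (simp add: sum.delta')
    also have "\<dots> = (\<Sum>j=1..n. B1 i j * (if j = k then 1 else 0))"
      by (intro sum.cong) auto
    also have "\<dots> = (\<Sum>j=1..n. B1 i j * (\<Sum>l=1..n. A j l * B2 l k))"
      using h2 True unfolding is_inverse_on_def by (intro sum.cong) auto
    also have "\<dots> = (\<Sum>j=1..n. \<Sum>l=1..n. B1 i j * A j l * B2 l k)"
      by (simp add: sum_distrib_left mult.assoc)
    also have "\<dots> = (\<Sum>l=1..n. (\<Sum>j=1..n. B1 i j * A j l) * B2 l k)"
      by (subst sum.swap) (simp add: sum_distrib_right)
    also have "\<dots> = (\<Sum>l=1..n. (if i = l then 1 else 0) * B2 l k)"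
      using h1 True unfolding is_inverse_on_def by (intro sum.cong) auto
    also have "\<dots> = (\<Sum>l=1..n. if l = i then B2 l k else 0)"
      by (intro sum.cong) auto
    also have "\<dots> = B2 i k"
      using True by (simp add: sum.delta')
    finally show ?thesis .
  qed
qed

lemma greenB_is_inverse:
  assumes n: "2 \<le> n"
  shows "is_inverse_on n (qCartanB n) (greenB n)"
  unfolding is_inverse_on_def
proof (intro conjI ballI allI impI)
  fix i k assume i: "i \<in> {1..n}" and k: "k \<in> {1..n}"
  have "(\<Sum>j=1..n. qCartanB n i j * greenB n j k)
      = (\<Sum>j=1..n. qCartanB n i j * kernelB n j k) / (scaleB n k * denomB n)"
    unfolding sum_divide_distrib using k by (intro sum.cong) (auto simp: greenB_def)
  also have "\<dots> = (if i = k then 1 else 0)"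
    using qCartanB_kernelB[OF n] i k scaleB_denomB_nonzero by auto
  finally show "(\<Sum>j=1..n. qCartanB n i j * greenB n j k) = (if i = k then 1 else 0)" .
  have "greenB n i j * qCartanB n j k = qCartanB n k j * kernelB n j i / (scaleB n k * denomB n)"
    if j: "j \<in> {1..n}" for j
  proof -
    have "qCartanB n j k / scaleB n j = qCartanB n k j / scaleB n k"
      using qCartanB_symmetrizable[OF j k] scaleB_denomB_nonzero[of n j] scaleB_denomB_nonzero[of n k]
      by (simp add: field_simps)
    then show ?thesis
      using i j scaleB_denomB_nonzero[of n j] scaleB_denomB_nonzero[of n k]
      by (simp add: greenB_def kernelB_commute[of n i] field_simps)
  qed
  then have "(\<Sum>j=1..n. greenB n i j * qCartanB n j k)
      = (\<Sum>j=1..n. qCartanB n k j * kernelB n j i) / (scaleB n k * denomB n)"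
    unfolding sum_divide_distrib by (intro sum.cong) auto
  also have "\<dots> = (if i = k then 1 else 0)"
    using qCartanB_kernelB[OF n] i k scaleB_denomB_nonzero by auto
  finally show "(\<Sum>j=1..n. greenB n i j * qCartanB n j k) = (if i = k then 1 else 0)" .
next
  fix i j assume "\<not> (i \<in> {1..n} \<and> j \<in> {1..n})"
  then show "greenB n i j = 0" by (auto simp: greenB_def)
qed

lemma invQCartanB_eq_greenB: "2 \<le> n \<Longrightarrow> invQCartanB n = greenB n"
  unfolding invQCartanB_def
  by (rule the_equality) (use greenB_is_inverse is_inverse_on_unique in blast)+

definition in_prog4 :: "int \<Rightarrow> int \<Rightarrow> int \<Rightarrow> bool" where
  "in_prog4 c a m \<longleftrightarrow> c \<le> m \<and> m < c + 4 * a \<and> 4 dvd (m - c)"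

definition prog4_series :: "int \<Rightarrow> int \<Rightarrow> 'a::field fls" where
  "prog4_series c a = Abs_fls (\<lambda>m. if in_prog4 c a m then 1 else 0)"

lemma prog4_series_nth: "fls_nth (prog4_series c a) m = (if in_prog4 c a m then 1 else 0)"
  unfolding prog4_series_def by (rule nth_Abs_fls_lower_bound[of c]) (simp add: in_prog4_def)

lemma prog4_series_telescope:
  assumes "0 \<le> a"
  shows "(mon fls_X 4 - 1) * prog4_series c a = mon fls_X (c + 4 * a) - (mon fls_X c :: 'a::field fls)"
proof (rule fls_eqI)
  fix m
  have "in_prog4 c a (m - 4) \<longleftrightarrow> in_prog4 c a m \<and> m \<noteq> c \<or> m = c + 4 * a \<and> 0 < a"
    "m = c \<Longrightarrow> in_prog4 c a m \<longleftrightarrow> 0 < a" "m = c + 4 * a \<Longrightarrow> \<not> in_prog4 c a m"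
    using assms unfolding in_prog4_def by presburger+
  then show "fls_nth ((mon fls_X 4 - 1) * prog4_series c a) m
      = fls_nth (mon fls_X (c + 4 * a) - mon fls_X c) m"
    using assms by (auto simp: left_diff_distrib mon_fls_X_times_nth prog4_series_nth mon_fls_X_nth)
qed

lemma in_prog4_bounds: "in_prog4 c a m \<Longrightarrow> c \<le> m \<and> m \<le> c + 4 * a - 4"
  unfolding in_prog4_def by presburger

lemma in_prog4_parity: "in_prog4 c a m \<Longrightarrow> even m \<longleftrightarrow> even c"
  unfolding in_prog4_def by presburger

lemma in_prog4_disjoint: "\<not> 4 dvd (c - c') \<Longrightarrow> \<not> (in_prog4 c a m \<and> in_prog4 c' a' m)"
  unfolding in_prog4_def by presburger

lemma in_prog4_reflect: "c + c' + 4 * a - 4 = N \<Longrightarrow> in_prog4 c a (N - m) \<longleftrightarrow> in_prog4 c' a m"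
  unfolding in_prog4_def by presburger

lemma in_prog4_pair_iff:
  fixes n i j k :: int
  assumes "1 \<le> i" "i < n" "1 \<le> j" "j \<le> n" "0 \<le> k" "k \<le> n - 1"
  shows "in_prog4 (2 * max j i - 2 * min j i + 2) (min j i) (2 * k)
       \<or> in_prog4 (4 * n - 2 * max j i - 2 * min j i) (min j i) (2 * k)
     \<longleftrightarrow> (i + 1 \<le> k + j \<and> k + j \<le> 2 * n - i - 1 \<and> 1 - i \<le> k - j \<and> k - j \<le> i - 1
          \<and> (k + j) - (i + 1) \<ge> 0 \<and> even ((k + j) - (i + 1))
          \<and> (k - j) - (1 - i) \<ge> 0 \<and> even ((k - j) - (1 - i)))
        \<or> 2 * n - i \<le> k + j"
proof -
  \<comment> \<open>2k lies in the residue class mod 4 of the first progression iff e holds, of the second iff not.\<close>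
  define e where "e \<longleftrightarrow> even (k + i + j + 1)"
  have "4 dvd (2 * k - (2 * max j i - 2 * min j i + 2)) \<longleftrightarrow> e"
    "4 dvd (2 * k - (4 * n - 2 * max j i - 2 * min j i)) \<longleftrightarrow> \<not> e"
    "even (k + j - (i + 1)) \<longleftrightarrow> e" "even (k - j - (1 - i)) \<longleftrightarrow> e"
    unfolding e_def max_def min_def by presburger+
  moreover have "e \<Longrightarrow> k \<noteq> j + i \<and> k \<noteq> 2 * n - i - j"
    unfolding e_def by presburger
  ultimately show ?thesis
    using assms unfolding in_prog4_def by (cases e; auto simp: max_def min_def)
qed

lemma fls_nth_div_one_plus_mon:
  fixes P :: "'a::field fls"
  assumes N: "0 < N" and P: "\<And>m. m < 0 \<or> N \<le> m \<Longrightarrow> fls_nth P m = 0"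
  shows "fls_nth (P / (1 + mon fls_X N)) m
    = (if m < 0 then 0 else (-1) ^ nat (m div N) * fls_nth P (m mod N))"
proof -
  define G where "G = Abs_fls (\<lambda>m. if m < 0 then 0 else (-1) ^ nat (m div N) * fls_nth P (m mod N))"
  have G: "fls_nth G m = (if m < 0 then 0 else (-1) ^ nat (m div N) * fls_nth P (m mod N))" for m
    unfolding G_def by (rule nth_Abs_fls_lower_bound[of 0]) simp
  have "G * (1 + mon fls_X N) = P"
  proof (rule fls_eqI)
    fix m
    show "fls_nth (G * (1 + mon fls_X N)) m = fls_nth P m"
    proof (cases "m < N")
      case True
      then show ?thesis
        using N P[of m] by (simp add: distrib_left mult.commute[of G] mon_fls_X_times_nth G)
    next
      case False
      have "m div N = (m - N) div N + 1" "m mod N = (m - N) mod N"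
        using div_add_self2[of N "m - N"] mod_add_self2[of "m - N" N] N by simp_all
      moreover have "0 \<le> (m - N) div N"
        using False N by (simp add: pos_imp_zdiv_nonneg_iff)
      ultimately show ?thesis
        using False N P[of m] by (simp add: distrib_left mult.commute[of G] mon_fls_X_times_nth G nat_add_distrib)
    qed
  qed
  moreover have "1 + mon fls_X N \<noteq> (0 :: 'a fls)"
    by (rule fls_nonzeroI[of _ 0]) (use N in \<open>simp add: mon_fls_X_nth\<close>)
  ultimately show ?thesis
    using G by (metis nonzero_mult_div_cancel_right)
qed

definition numB :: "nat \<Rightarrow> nat \<Rightarrow> nat \<Rightarrow> rat fls" where
  "numB n j i = (if i < n then
      prog4_series (2 * max (int j) (int i) - 2 * min (int j) (int i) + 2) (min (int j) (int i))
      + prog4_series (4 * int n - 2 * max (int j) (int i) - 2 * min (int j) (int i)) (min (int j) (int i))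
    else prog4_series (2 * int n + 1 - 2 * int j) (int j))"

lemma greenB_eq_numB:
  assumes n: "2 \<le> n" and j: "j \<in> {1..n}" and i: "i \<in> {1..n}"
  shows "greenB n j i = numB n j i / (1 + mon fls_X (4 * int n - 2))"
proof -
  let ?a = "min (int j) (int i)" and ?b = "max (int j) (int i)"
  have "(mon fls_X 4 - 1) * (kernelB n j i / scaleB n i * (1 + mon fls_X (4 * int n - 2)))
      = (mon fls_X 4 - 1) * (numB n j i * denomB n)"
  proof (cases "i < n")
    case True
    have "(mon fls_X 4 - 1) * numB n j i
        = mon fls_X (2 * ?b - 2 * ?a + 2 + 4 * ?a) - mon fls_X (2 * ?b - 2 * ?a + 2)
          + (mon fls_X (4 * int n - 2 * ?b - 2 * ?a + 4 * ?a) - mon fls_X (4 * int n - 2 * ?b - 2 * ?a))"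
      using True by (simp add: numB_def distrib_left prog4_series_telescope)
    then show ?thesis
      using True qminus_qplus_progression_identity[of "fls_X :: rat fls" ?a "int n" ?b]
      by (simp add: kernelB_def scaleB_def lowB_def highB_def denomB_def mult_ac)
  next
    case False
    with i have "i = n" by simp
    have "(mon fls_X 4 - 1) * numB n j i
        = mon fls_X (2 * int n + 1 - 2 * int j + 4 * int j) - mon fls_X (2 * int n + 1 - 2 * int j)"
      using False by (simp add: numB_def prog4_series_telescope)
    then show ?thesis
      using \<open>i = n\<close> j qminus_progression_identity[of "fls_X :: rat fls" "int j" "int n"]
      by (simp add: kernelB_def scaleB_def lowB_def highB_top denomB_def mult_ac qplus_fls_X_nonzero)
  qed
  moreover have "mon fls_X 4 - 1 \<noteq> (0 :: rat fls)"
    by (rule fls_nonzeroI[of _ 0]) (simp add: mon_fls_X_nth)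
  ultimately have "kernelB n j i / scaleB n i * (1 + mon fls_X (4 * int n - 2)) = numB n j i * denomB n"
    by (metis mult_left_cancel)
  moreover have "1 + mon fls_X (4 * int n - 2) \<noteq> (0 :: rat fls)"
    by (rule fls_nonzeroI[of _ 0]) (use n in \<open>simp add: mon_fls_X_nth\<close>)
  ultimately show ?thesis
    using i j scaleB_denomB_nonzero[of n i] by (simp add: greenB_def frac_eq_eq divide_eq_eq eq_divide_eq mult_ac)
qed

lemma numB_nth:
  "fls_nth (numB n j i) m = (if i < n then
      (if in_prog4 (2 * max (int j) (int i) - 2 * min (int j) (int i) + 2) (min (int j) (int i)) m then 1 else 0)
      + (if in_prog4 (4 * int n - 2 * max (int j) (int i) - 2 * min (int j) (int i)) (min (int j) (int i)) m
         then 1 else 0)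
    else if in_prog4 (2 * int n + 1 - 2 * int j) (int j) m then 1 else 0)"
  by (simp add: numB_def prog4_series_nth)

lemma numB_nth_outside:
  assumes j: "j \<in> {1..n}" and i: "i \<in> {1..n}" and m: "m \<le> 0 \<or> 4 * int n - 2 \<le> m"
  shows "fls_nth (numB n j i) m = 0"
  using in_prog4_bounds[of _ "min (int j) (int i)" m] in_prog4_bounds[of _ "int j" m] i j m
  by (force simp: numB_nth)

lemma numB_nth_reflect: "fls_nth (numB n j i) (4 * int n - 2 - m) = fls_nth (numB n j i) m"
proof -
  let ?a = "min (int j) (int i)" and ?b = "max (int j) (int i)"
  have "in_prog4 (2 * ?b - 2 * ?a + 2) ?a (4 * int n - 2 - m) \<longleftrightarrow> in_prog4 (4 * int n - 2 * ?b - 2 * ?a) ?a m"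
    "in_prog4 (4 * int n - 2 * ?b - 2 * ?a) ?a (4 * int n - 2 - m) \<longleftrightarrow> in_prog4 (2 * ?b - 2 * ?a + 2) ?a m"
    "in_prog4 (2 * int n + 1 - 2 * int j) (int j) (4 * int n - 2 - m)
       \<longleftrightarrow> in_prog4 (2 * int n + 1 - 2 * int j) (int j) m"
    by (rule in_prog4_reflect; simp)+
  then show ?thesis
    by (simp add: numB_nth)
qed

lemma numB_nth_odd: "i < n \<Longrightarrow> odd m \<Longrightarrow> fls_nth (numB n j i) m = 0"
  by (auto simp: numB_nth dest!: in_prog4_parity)

lemma numB_nth_top_even: "even m \<Longrightarrow> fls_nth (numB n j n) m = 0"
  by (auto simp: numB_nth dest!: in_prog4_parity)

lemma numB_nth_even:
  assumes i: "1 \<le> i" "i < n" and j: "1 \<le> j" "j \<le> n" and k: "k \<le> n - 1"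
  shows "fls_nth (numB n j i) (2 * int k) =
    (if (int i + 1 \<le> int k + int j \<and> int k + int j \<le> 2 * int n - int i - 1 \<and>
         1 - int i \<le> int k - int j \<and> int k - int j \<le> int i - 1 \<and>
         (int k + int j) - (int i + 1) \<ge> 0 \<and> even ((int k + int j) - (int i + 1)) \<and>
         (int k - int j) - (1 - int i) \<ge> 0 \<and> even ((int k - int j) - (1 - int i)))
        \<or> 2 * int n - int i \<le> int k + int j
     then 1 else 0)"
proof -
  let ?a = "min (int j) (int i)" and ?b = "max (int j) (int i)"
  have "\<not> (in_prog4 (2 * ?b - 2 * ?a + 2) ?a (2 * int k) \<and> in_prog4 (4 * int n - 2 * ?b - 2 * ?a) ?a (2 * int k))"
    by (rule in_prog4_disjoint) presburger
  moreover have "int k \<le> int n - 1"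
    using i k by linarith
  ultimately show ?thesis
    using in_prog4_pair_iff[of "int i" "int n" "int j" "int k"] i j by (auto simp: numB_nth)
qed

lemma numB_nth_top_odd:
  assumes "k < n"
  shows "fls_nth (numB n j n) (2 * int k + 1) =
    (if int k + int j - int n \<ge> 0 \<and> even (int k + int j - int n) then 1 else 0)"
  using assms unfolding numB_nth in_prog4_def by auto presburger+

lemma ctilde_eq_numB_nth:
  assumes n: "2 \<le> n" and j: "j \<in> {1..n}" and i: "i \<in> {1..n}" and m: "0 \<le> m"
  shows "ctilde n j i (- m)
    = (-1) ^ nat (m div (4 * int n - 2)) * fls_nth (numB n j i) (m mod (4 * int n - 2))"
proof -
  have "fls_nth (numB n j i) r = 0" if "r < 0 \<or> 4 * int n - 2 \<le> r" for r
    using numB_nth_outside[OF j i, of r] that by linarith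
  then show ?thesis
    using fls_nth_div_one_plus_mon[of "4 * int n - 2" "numB n j i" m] n m
    by (simp add: ctilde_def invQCartanB_eq_greenB[OF n] greenB_eq_numB[OF n j i])
qed

lemma ctilde_eq_numB_nth_small:
  assumes "2 \<le> n" "j \<in> {1..n}" "i \<in> {1..n}" "0 \<le> m" "m < 4 * int n - 2"
  shows "ctilde n j i (- m) = fls_nth (numB n j i) m"
  using ctilde_eq_numB_nth[OF assms(1-4)] assms(4,5) by simp

lemma ctilde_reflect:
  assumes n: "2 \<le> n" and j: "j \<in> {1..n}" and i: "i \<in> {1..n}" and m: "0 \<le> m" "m \<le> 4 * int n - 2"
  shows "ctilde n j i (- m) = ctilde n j i (m - (4 * int n - 2))"
proof -
  let ?N = "4 * int n - 2"
  have zero: "ctilde n j i 0 = 0" "ctilde n j i (- ?N) = 0"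
    using ctilde_eq_numB_nth[OF n j i, of 0] ctilde_eq_numB_nth[OF n j i, of ?N] numB_nth_outside[OF j i, of 0] n
    by simp_all
  consider "m = 0" | "m = ?N" | "0 < m" "m < ?N"
    using m by linarith
  then show ?thesis
  proof cases
    case 3
    then show ?thesis
      using ctilde_eq_numB_nth_small[OF n j i, of m] ctilde_eq_numB_nth_small[OF n j i, of "?N - m"]
      by (simp add: numB_nth_reflect)
  qed (use zero in simp_all)
qed

lemma ctilde_odd_vanish:
  assumes "2 \<le> n" "j \<in> {1..n}" "i \<in> {1..n}" "i < n" "0 \<le> m" "odd m"
  shows "ctilde n j i (- m) = 0"
proof -
  have "even (4 * int n - 2)"
    by simp
  with \<open>odd m\<close> have "odd (m mod (4 * int n - 2))"
    by (metis dvd_mod_iff even_mod_2_iff)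
  then show ?thesis
    using ctilde_eq_numB_nth[OF assms(1-3,5)] numB_nth_odd[OF \<open>i < n\<close>] by simp
qed

lemma ctilde_top_even_vanish:
  assumes "2 \<le> n" "j \<in> {1..n}" "0 \<le> m" "even m"
  shows "ctilde n j n (- m) = 0"
proof -
  have "even (m mod (4 * int n - 2))"
    using \<open>even m\<close> by (simp add: dvd_mod)
  then show ?thesis
    using ctilde_eq_numB_nth[OF assms(1,2) _ assms(3)] numB_nth_top_even assms(1) by simp
qed

theorem lemmaA1:
  fixes n :: nat
  assumes "n \<ge> 2"
  shows
   "(\<forall>j\<in>{1..n}. \<forall>k::nat.
       (\<forall>i\<in>{1..n-1}. ctilde n j i (- 2 * int k - 1) = 0) \<and>
       ctilde n j n (- 2 * int k - 2) = 0)
    \<and>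
    (\<forall>j\<in>{1..n}. \<forall>k::nat. k \<le> n - 1 \<longrightarrow>
       (\<forall>i\<in>{1..n-1}. ctilde n j i (- 2 * int k) =
          (if (int i + 1 \<le> int k + int j \<and> int k + int j \<le> 2 * int n - int i - 1 \<and>
               1 - int i \<le> int k - int j \<and> int k - int j \<le> int i - 1 \<and>
               (int k + int j) - (int i + 1) \<ge> 0 \<and> even ((int k + int j) - (int i + 1)) \<and>
               (int k - int j) - (1 - int i) \<ge> 0 \<and> even ((int k - int j) - (1 - int i)))
              \<or> 2 * int n - int i \<le> int k + int j
           then 1 else 0)) \<and>
       ctilde n j n (- 2 * int k - 1) =
          (if int k + int j - int n \<ge> 0 \<and> even (int k + int j - int n) then 1 else 0))
    \<and>
    (\<forall>j\<in>{1..n}. \<forall>k::nat. k \<le> n - 1 \<longrightarrow>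
       (\<forall>i\<in>{1..n-1}. ctilde n j i (- 2 * int k) = ctilde n j i (- 4 * int n + 2 + 2 * int k)) \<and>
       ctilde n j n (- 2 * int k - 1) = ctilde n j n (- 4 * int n + 3 + 2 * int k))"
proof (intro conjI ballI allI impI, goal_cases)
  case (1 j k i)
  then have "i < n"
    by auto
  with 1 show ?case
    using ctilde_odd_vanish[OF assms, of j i "2 * int k + 1"] by simp
next
  case (2 j k)
  then show ?case
    using ctilde_top_even_vanish[OF assms, of j "2 * int k + 2"] by simp
next
  case (3 j k i)
  then have "i < n" "2 * int k < 4 * int n - 2"
    by auto
  with 3 show ?case
    using ctilde_eq_numB_nth_small[OF assms, of j i "2 * int k"] numB_nth_even[of i n j k] by simp
next
  case (4 j k)
  then have "k < n" "2 * int k + 1 < 4 * int n - 2"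
    using assms by auto
  with 4 show ?case
    using ctilde_eq_numB_nth_small[OF assms, of j n "2 * int k + 1"] numB_nth_top_odd[of k n j] by simp
next
  case (5 j k i)
  have "ctilde n j i (- (2 * int k)) = ctilde n j i (2 * int k - (4 * int n - 2))"
    by (rule ctilde_reflect) (use 5 assms in auto)
  moreover have "2 * int k - (4 * int n - 2) = - 4 * int n + 2 + 2 * int k"
    by simp
  ultimately show ?case
    by simp
next
  case (6 j k)
  have "ctilde n j n (- (2 * int k + 1)) = ctilde n j n (2 * int k + 1 - (4 * int n - 2))"
    by (rule ctilde_reflect) (use 6 assms in auto)
  moreover have "- (2 * int k + 1) = - 2 * int k - 1"
    "2 * int k + 1 - (4 * int n - 2) = - 4 * int n + 3 + 2 * int k"
    by simp_all
  ultimately show ?case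
    by metis
qed

end
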